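(* For the power network system described in the context, there exist a constant switching vector $\sigma^*\in\{0,1\}^{|\tilde{\mathcal L}|}$, an equilibrium of the system with $\sigma=\sigma^*$ (whose power command entries all equal a common value $p^{c,*}$), and $\zeta\in\mathbb R$ such that $p^{c,*}-\beta/K\le\zeta\le p^{c,*}$ and, for every $(l,j)\in\tilde{\mathcal L}$: $\sigma^*_{l,j}\in\{0\}$ if $\zeta>c_{l,j}/\overline d_{l,j}$; $\sigma^*_{l,j}\in\{0,\rho_{l,j}\}$ if $\zeta=c_{l,j}/\overline d_{l,j}$; $\sigma^*_{l,j}\in\{\rho_{l,j}\}$ if $|\zeta|<c_{l,j}/\overline d_{l,j}$; $\sigma^*_{l,j}\in\{\rho_{l,j},1\}$ if $\zeta=-c_{l,j}/\overline d_{l,j}$; $\sigma^*_{l,j}\in\{1\}$ if $\zeta<-c_{l,j}/\overline d_{l,j}$.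
   Context: Let $(\mathcal N,\mathcal E)$ be a connected directed graph (power network), bus set $\mathcal N=\{1,\dots,|\mathcal N|\}$, arbitrarily oriented ($(i,j)\in\mathcal E\Rightarrow(j,i)\notin\mathcal E$), $\mathcal N^p_j=\{k:(k,j)\in\mathcal E\}$, $\mathcal N^s_j=\{k:(j,k)\in\mathcal E\}$; $(\mathcal N,\tilde{\mathcal E})$ a connected directed graph (communication network). For $j\in\mathcal N$, $\mathcal L_j$ is a finite set of on-off loads, $\tilde{\mathcal L}=\{(l,j):l\in\mathcal L_j,j\in\mathcal N\}$; load $(l,j)$ has magnitude $\overline d_{l,j}>0$, state $\sigma_{l,j}\in\{0,1\}$, desired state $\rho_{l,j}\in\{0,1\}$ and cost constant $c_{l,j}$. $\beta=\max_{(l,j)\in\tilde{\mathcal L}}\overline d_{l,j}$. Constants $M_j,\gamma_j,\kappa_j,A_j,\tau_j>0$, $p^L_j\in\mathbb R$, $B_{ij}>0$, $\tau_{ij}>0$; $K=\sum_j\kappa_j$. Dynamics in state $(\eta,\omega,p^M,p^c,\psi)$: $\dot\eta_{ij}=\omega_i-\omega_j$, $(i,j)\in\mathcal E$; $M_j\dot\omega_j=p^M_j-p^L_j-A_j\omega_j-\sum_{l\in\mathcal L_j}\overline d_{l,j}\sigma_{l,j}-\sum_{k\in\mathcal N^s_j}B_{jk}\eta_{jk}+\sum_{i\in\mathcal N^p_j}B_{ij}\eta_{ij}$; $\gamma_j\dot p^M_j=-(p^M_j+\kappa_j\omega_j-\kappa_jp^c_j)$; $\tau_{ij}\dot\psi_{ij}=p^c_i-p^c_j$,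 $(i,j)\in\tilde{\mathcal E}$; $\tau_j\dot p^c_j=-p^M_j+p^L_j+\sum_{l\in\mathcal L_j}\overline d_{l,j}\sigma_{l,j}-\sum_{k:(j,k)\in\tilde{\mathcal E}}\psi_{jk}+\sum_{i:(i,j)\in\tilde{\mathcal E}}\psi_{ij}$. An equilibrium for fixed $\sigma$ is a state where all derivatives vanish; at any equilibrium all entries of $p^c$ coincide. *)

theory Defs
  imports Complex_Main
begin

(* Buses are the elements of a finite type 'b (bus set = UNIV).
   A directed graph is a set of ordered pairs of buses. *)

definition weakly_connected :: "('b \<times> 'b) set \<Rightarrow> bool" where
  "weakly_connected E \<longleftrightarrow> (\<forall>i j. (i, j) \<in> (E \<union> E\<inverse>)\<^sup>*)"

definition oriented :: "('b \<times> 'b) set \<Rightarrow> bool" where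
  "oriented E \<longleftrightarrow> (\<forall>i j. (i, j) \<in> E \<longrightarrow> (j, i) \<notin> E)"

(* right-hand sides of the dynamics, i.e. the time derivatives *)

definition deta :: "('b \<times> 'b) set \<Rightarrow> ('b \<Rightarrow> real) \<Rightarrow> 'b \<Rightarrow> 'b \<Rightarrow> real" where
  "deta E \<omega> i j = \<omega> i - \<omega> j"

definition domega ::
  "('b \<times> 'b) set \<Rightarrow> ('b \<Rightarrow> 'l set) \<Rightarrow> ('l \<Rightarrow> 'b \<Rightarrow> real) \<Rightarrow> ('b \<Rightarrow> real) \<Rightarrow> ('b \<Rightarrow> real)
   \<Rightarrow> ('b \<Rightarrow> real) \<Rightarrow> ('b \<times> 'b \<Rightarrow> real) \<Rightarrow> ('l \<Rightarrow> 'b \<Rightarrow> real)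
   \<Rightarrow> ('b \<times> 'b \<Rightarrow> real) \<Rightarrow> ('b \<Rightarrow> real) \<Rightarrow> ('b \<Rightarrow> real) \<Rightarrow> 'b \<Rightarrow> real" where
  "domega E L dbar M A pL B \<sigma> \<eta> \<omega> pM j =
     (pM j - pL j - A j * \<omega> j - (\<Sum>l\<in>L j. dbar l j * \<sigma> l j)
       - (\<Sum>k\<in>{k. (j, k) \<in> E}. B (j, k) * \<eta> (j, k))
       + (\<Sum>i\<in>{i. (i, j) \<in> E}. B (i, j) * \<eta> (i, j))) / M j"

definition dpM :: "('b \<Rightarrow> real) \<Rightarrow> ('b \<Rightarrow> real) \<Rightarrow> ('b \<Rightarrow> real) \<Rightarrow> ('b \<Rightarrow> real)
   \<Rightarrow> ('b \<Rightarrow> real) \<Rightarrow> 'b \<Rightarrow> real" where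
  "dpM \<gamma> \<kappa> \<omega> pM pc j = - (pM j + \<kappa> j * \<omega> j - \<kappa> j * pc j) / \<gamma> j"

definition dpsi :: "('b \<times> 'b \<Rightarrow> real) \<Rightarrow> ('b \<Rightarrow> real) \<Rightarrow> 'b \<Rightarrow> 'b \<Rightarrow> real" where
  "dpsi \<tau>E pc i j = (pc i - pc j) / \<tau>E (i, j)"

definition dpc ::
  "('b \<times> 'b) set \<Rightarrow> ('b \<Rightarrow> 'l set) \<Rightarrow> ('l \<Rightarrow> 'b \<Rightarrow> real) \<Rightarrow> ('b \<Rightarrow> real) \<Rightarrow> ('b \<Rightarrow> real)
   \<Rightarrow> ('l \<Rightarrow> 'b \<Rightarrow> real) \<Rightarrow> ('b \<Rightarrow> real) \<Rightarrow> ('b \<times> 'b \<Rightarrow> real) \<Rightarrow> 'b \<Rightarrow> real" where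
  "dpc Et L dbar \<tau> pL \<sigma> pM \<psi> j =
     (- pM j + pL j + (\<Sum>l\<in>L j. dbar l j * \<sigma> l j)
       - (\<Sum>k\<in>{k. (j, k) \<in> Et}. \<psi> (j, k))
       + (\<Sum>i\<in>{i. (i, j) \<in> Et}. \<psi> (i, j))) / \<tau> j"

definition equilibrium ::
  "('b \<times> 'b) set \<Rightarrow> ('b \<times> 'b) set \<Rightarrow> ('b \<Rightarrow> 'l set) \<Rightarrow> ('l \<Rightarrow> 'b \<Rightarrow> real)
   \<Rightarrow> ('b \<Rightarrow> real) \<Rightarrow> ('b \<Rightarrow> real) \<Rightarrow> ('b \<Rightarrow> real) \<Rightarrow> ('b \<Rightarrow> real) \<Rightarrow> ('b \<Rightarrow> real)
   \<Rightarrow> ('b \<Rightarrow> real) \<Rightarrow> ('b \<times> 'b \<Rightarrow> real) \<Rightarrow> ('b \<times> 'b \<Rightarrow> real)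
   \<Rightarrow> ('l \<Rightarrow> 'b \<Rightarrow> real)
   \<Rightarrow> ('b \<times> 'b \<Rightarrow> real) \<Rightarrow> ('b \<Rightarrow> real) \<Rightarrow> ('b \<Rightarrow> real) \<Rightarrow> ('b \<Rightarrow> real)
   \<Rightarrow> ('b \<times> 'b \<Rightarrow> real) \<Rightarrow> bool" where
  "equilibrium E Et L dbar M \<gamma> \<kappa> A \<tau> pL B \<tau>E \<sigma> \<eta> \<omega> pM pc \<psi> \<longleftrightarrow>
     (\<forall>(i, j)\<in>E. deta E \<omega> i j = 0) \<and>
     (\<forall>j. domega E L dbar M A pL B \<sigma> \<eta> \<omega> pM j = 0) \<and>
     (\<forall>j. dpM \<gamma> \<kappa> \<omega> pM pc j = 0) \<and>
     (\<forall>(i, j)\<in>Et. dpsi \<tau>E pc i j = 0) \<and>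
     (\<forall>j. dpc Et L dbar \<tau> pL \<sigma> pM \<psi> j = 0)"

(* beta = max of load magnitudes (0 if there are no loads; all magnitudes are > 0) *)
definition beta :: "('b \<Rightarrow> 'l set) \<Rightarrow> ('l \<Rightarrow> 'b \<Rightarrow> real) \<Rightarrow> real" where
  "beta L dbar = Max (insert 0 {dbar l j | l j. l \<in> L j})"

end

theory Submission
  imports Defs
begin

text \<open>With \<open>\<omega> = 0\<close> and \<open>pM j = \<kappa> j * pcs\<close>, the flows on the two weakly connected graphs
  can absorb any balanced mismatch, so a switching \<open>\<sigma>\<close> admits an equilibrium with common command
  \<open>pcs\<close> as soon as \<open>K * pcs\<close> equals the net demand of \<open>\<sigma>\<close>. To choose \<open>\<sigma>\<close>, note that the net
  demand of the largest switching admissible at \<open>\<zeta>\<close> is a bounded step function of \<open>\<zeta>\<close>, whose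
  right limits are the net demands of the smallest admissible switching; it therefore crosses the
  line \<open>K * \<zeta>\<close>. At the crossing point, moving the loads that sit exactly at a threshold from the
  smallest to the largest admissible state one at a time changes the net demand in steps of at most
  \<open>\<beta>\<close>, so some admissible \<open>\<sigma>\<close> has net demand in \<open>[K * \<zeta>, K * \<zeta> + \<beta>]\<close>, i.e.
  \<open>pcs - \<beta> / K \<le> \<zeta> \<le> pcs\<close>.\<close>

definition divergence :: "('b \<times> 'b) set \<Rightarrow> ('b \<times> 'b \<Rightarrow> real) \<Rightarrow> 'b \<Rightarrow> real" where
  "divergence E f j = (\<Sum>k\<in>{k. (j, k) \<in> E}. f (j, k)) - (\<Sum>i\<in>{i. (i, j) \<in> E}. f (i, j))"

lemma divergence_add: "divergence E (\<lambda>e. f e + g e) j = divergence E f j + divergence E g j"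
  by (simp add: divergence_def sum.distrib)

lemma divergence_diff: "divergence E (\<lambda>e. f e - g e) j = divergence E f j - divergence E g j"
  by (simp add: divergence_def sum_subtractf)

lemma divergence_cmult: "divergence E (\<lambda>e. c * f e) j = c * divergence E f j"
  by (simp add: divergence_def sum_distrib_left right_diff_distrib)

lemma divergence_sum: "divergence E (\<lambda>e. \<Sum>a\<in>A. f a e) j = (\<Sum>a\<in>A. divergence E (f a) j)"
  by (simp add: divergence_def sum.swap[of _ A] sum_subtractf)

lemma divergence_unit_edge:
  fixes E :: "('b::finite \<times> 'b) set"
  assumes "(u, v) \<in> E"
  shows "divergence E (\<lambda>e. if e = (u, v) then 1 else 0) j
    = (if j = u then 1 else 0) - (if j = v then 1 else 0)"
proof -
  have "(\<Sum>k\<in>{k. (j, k) \<in> E}. if (j, k) = (u, v) then 1 else 0 :: real) = (if j = u then 1 else 0)"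
    using assms by (cases "j = u") simp_all
  moreover have "(\<Sum>i\<in>{i. (i, j) \<in> E}. if (i, j) = (u, v) then 1 else 0 :: real) = (if j = v then 1 else 0)"
    using assms by (cases "j = v") simp_all
  ultimately show ?thesis by (simp add: divergence_def)
qed

lemma exists_path_flow:
  fixes E :: "('b::finite \<times> 'b) set"
  assumes "(a, b) \<in> (E \<union> E\<inverse>)\<^sup>*"
  shows "\<exists>f. \<forall>j. divergence E f j = (if j = a then 1 else 0) - (if j = b then 1 else 0)"
  using assms
proof (induction rule: rtrancl_induct)
  case base
  show ?case by (rule exI[of _ "\<lambda>_. 0"]) (simp add: divergence_def)
next
  case (step b c)
  then obtain f where f: "\<And>j. divergence E f j = (if j = a then 1 else 0) - (if j = b then 1 else 0)"
    by blast
  from step.hyps(2) consider "(b, c) \<in> E" | "(c, b) \<in> E" by blast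
  then show ?case
  proof cases
    case 1
    then show ?thesis
      by (intro exI[of _ "\<lambda>e. f e + (if e = (b, c) then 1 else 0)"])
        (simp add: divergence_add divergence_unit_edge[OF 1] f)
  next
    case 2
    then show ?thesis
      by (intro exI[of _ "\<lambda>e. f e - (if e = (c, b) then 1 else 0)"])
        (simp add: divergence_diff divergence_unit_edge[OF 2] f)
  qed
qed

text \<open>Superpose, with weights \<open>r\<close>, unit path flows from every node to a fixed root.\<close>

lemma exists_flow_with_divergence:
  fixes E :: "('b::finite \<times> 'b) set"
  assumes "weakly_connected E" and "(\<Sum>j\<in>UNIV. r j) = 0"
  shows "\<exists>f. \<forall>j. divergence E f j = r j"
proof -
  fix root :: 'b
  have "\<forall>a. \<exists>f. \<forall>j. divergence E f j = (if j = a then 1 else 0) - (if j = root then 1 else 0)"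
    using exists_path_flow assms(1) unfolding weakly_connected_def by blast
  then obtain F where F: "\<And>a j. divergence E (F a) j
      = (if j = a then 1 else 0) - (if j = root then 1 else 0)"
    by metis
  have "divergence E (\<lambda>e. \<Sum>a\<in>UNIV. r a * F a e) j = r j" for j
  proof -
    have "divergence E (\<lambda>e. \<Sum>a\<in>UNIV. r a * F a e) j
        = (\<Sum>a\<in>UNIV. r a * ((if j = a then 1 else 0) - (if j = root then 1 else 0)))"
      by (simp only: divergence_sum divergence_cmult F)
    also have "\<dots> = (\<Sum>a\<in>UNIV. r a * (if j = a then 1 else 0)) - (\<Sum>a\<in>UNIV. r a) * (if j = root then 1 else 0)"
      by (simp only: right_diff_distrib sum_subtractf sum_distrib_right)
    also have "\<dots> = r j"
      using assms(2) by (simp add: mult.commute[of "r _"] if_distrib[of "\<lambda>x. x * r _"] cong: if_cong)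
    finally show ?thesis .
  qed
  then show ?thesis by blast
qed

definition net_demand ::
  "('b \<Rightarrow> 'l set) \<Rightarrow> ('l \<Rightarrow> 'b \<Rightarrow> real) \<Rightarrow> ('b \<Rightarrow> real) \<Rightarrow> ('l \<Rightarrow> 'b \<Rightarrow> real) \<Rightarrow> real" where
  "net_demand L dbar pL \<sigma> = (\<Sum>j\<in>UNIV. pL j + (\<Sum>l\<in>L j. dbar l j * \<sigma> l j))"

lemma equilibrium_with_common_command:
  fixes E Et :: "('b::finite \<times> 'b) set"
  assumes "weakly_connected E" and "weakly_connected Et"
    and "\<And>e. e \<in> E \<Longrightarrow> B e \<noteq> 0"
    and "(\<Sum>j\<in>UNIV. \<kappa> j) * pcs = net_demand L dbar pL \<sigma>"
  shows "\<exists>\<eta> \<omega> pM \<psi>. equilibrium E Et L dbar M \<gamma> \<kappa> A \<tau> pL B \<tau>E \<sigma> \<eta> \<omega> pM (\<lambda>_. pcs) \<psi>"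
proof -
  define pM where "pM j = \<kappa> j * pcs" for j
  define mismatch where "mismatch j = pM j - pL j - (\<Sum>l\<in>L j. dbar l j * \<sigma> l j)" for j
  have "(\<Sum>j\<in>UNIV. mismatch j) = 0"
    using assms(4) by (simp add: mismatch_def pM_def net_demand_def sum_subtractf sum.distrib
        sum_distrib_right)
  then obtain f \<psi> where f: "\<And>j. divergence E f j = mismatch j"
    and \<psi>: "\<And>j. divergence Et \<psi> j = - mismatch j"
    using exists_flow_with_divergence[OF assms(1), of mismatch]
      exists_flow_with_divergence[OF assms(2), of "\<lambda>j. - mismatch j"]
    by (metis sum_negf neg_0_equal_iff_equal)
  define \<eta> where "\<eta> e = f e / B e" for e
  have "B e * \<eta> e = f e" if "e \<in> E" for e
    using assms(3)[OF that] by (simp add: \<eta>_def)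
  then have "divergence E (\<lambda>e. B e * \<eta> e) j = mismatch j" for j
    using f[of j] by (simp add: divergence_def)
  then have "domega E L dbar M A pL B \<sigma> \<eta> (\<lambda>_. 0) pM j = 0" for j
    by (simp add: domega_def divergence_def mismatch_def algebra_simps)
  moreover have "dpc Et L dbar \<tau> pL \<sigma> pM \<psi> j = 0" for j
    using \<psi>[of j] by (simp add: dpc_def divergence_def mismatch_def algebra_simps)
  ultimately have "equilibrium E Et L dbar M \<gamma> \<kappa> A \<tau> pL B \<tau>E \<sigma> \<eta> (\<lambda>_. 0) pM (\<lambda>_. pcs) \<psi>"
    by (simp add: equilibrium_def deta_def dpM_def dpsi_def pM_def)
  then show ?thesis by blast
qed

lemma net_demand_mono:
  assumes "\<And>j l. l \<in> L j \<Longrightarrow> 0 \<le> dbar l j" and "\<And>j l. l \<in> L j \<Longrightarrow> \<sigma> l j \<le> \<sigma>' l j"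
  shows "net_demand L dbar pL \<sigma> \<le> net_demand L dbar pL \<sigma>'"
  unfolding net_demand_def using assms
  by (intro sum_mono add_left_mono) (simp add: mult_left_mono)

lemma eventually_net_demand_eq:
  fixes L :: "'b::finite \<Rightarrow> 'l set"
  assumes "\<And>j. finite (L j)" and "\<And>j l. l \<in> L j \<Longrightarrow> eventually (\<lambda>z. \<sigma> z l j = \<sigma>' l j) F"
  shows "eventually (\<lambda>z. net_demand L dbar pL (\<sigma> z) = net_demand L dbar pL \<sigma>') F"
proof -
  have "eventually (\<lambda>z. \<forall>j\<in>UNIV. \<forall>l\<in>L j. \<sigma> z l j = \<sigma>' l j) F"
    using assms by (intro eventually_ball_finite ballI) auto
  then show ?thesis
    by eventually_elim (simp add: net_demand_def)
qed

lemma net_demand_Sigma: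
  fixes L :: "'b::finite \<Rightarrow> 'l set"
  assumes "\<And>j. finite (L j)"
  shows "net_demand L dbar pL \<sigma>
    = (\<Sum>j\<in>UNIV. pL j) + (\<Sum>(j, l)\<in>Sigma UNIV L. dbar l j * \<sigma> l j)"
  using assms by (simp add: net_demand_def sum.distrib sum.Sigma)

text \<open>For a load with threshold \<open>t = c / dbar\<close> and desired state \<open>r\<close>, the admissible states at
  \<open>\<zeta>\<close> range from \<open>lower_switch t r \<zeta>\<close> to \<open>upper_switch t r \<zeta>\<close>; the two differ only at \<open>\<zeta> = \<plusminus>t\<close>.\<close>

definition upper_switch :: "real \<Rightarrow> real \<Rightarrow> real \<Rightarrow> real" where
  "upper_switch t r z = (if z \<le> - t then 1 else if z \<le> t then r else 0)"

definition lower_switch :: "real \<Rightarrow> real \<Rightarrow> real \<Rightarrow> real" where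
  "lower_switch t r z = (if z < - t then 1 else if z < t then r else 0)"

lemma switch_binary:
  assumes "r \<in> {0, 1}"
  shows "upper_switch t r z \<in> {0, 1}" and "lower_switch t r z \<in> {0, 1}"
  using assms by (auto simp: upper_switch_def lower_switch_def)

lemma lower_le_upper_switch:
  assumes "r \<in> {0, 1}"
  shows "lower_switch t r z \<le> upper_switch t r z" and "upper_switch t r z \<le> lower_switch t r z + 1"
  using assms by (auto simp: upper_switch_def lower_switch_def)

lemma eventually_le_iff_at_left: "eventually (\<lambda>z. z \<le> \<theta> \<longleftrightarrow> \<zeta> \<le> \<theta>) (at_left \<zeta>)"
  for \<theta> \<zeta> :: real
proof (cases "\<zeta> \<le> \<theta>")
  case True
  then show ?thesis
    using eventually_at_left_field[of _ \<zeta>] by (auto intro: exI[of _ "\<zeta> - 1"])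
next
  case False
  then show ?thesis
    using eventually_at_left_field[of _ \<zeta>] by (auto intro!: exI[of _ \<theta>])
qed

lemma eventually_le_iff_at_right: "eventually (\<lambda>z. z \<le> \<theta> \<longleftrightarrow> \<zeta> < \<theta>) (at_right \<zeta>)"
  for \<theta> \<zeta> :: real
proof (cases "\<zeta> < \<theta>")
  case True
  then show ?thesis
    using eventually_at_right_field[of _ \<zeta>] by (auto intro!: exI[of _ \<theta>])
next
  case False
  then show ?thesis
    using eventually_at_right_field[of _ \<zeta>] by (auto intro: exI[of _ "\<zeta> + 1"])
qed

lemma eventually_upper_switch_at_left:
  "eventually (\<lambda>z. upper_switch t r z = upper_switch t r \<zeta>) (at_left \<zeta>)"
  using eventually_le_iff_at_left[of "- t" \<zeta>] eventually_le_iff_at_left[of t \<zeta>]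
  by eventually_elim (simp add: upper_switch_def)

lemma eventually_upper_switch_at_right:
  "eventually (\<lambda>z. upper_switch t r z = lower_switch t r \<zeta>) (at_right \<zeta>)"
  using eventually_le_iff_at_right[of "- t" \<zeta>] eventually_le_iff_at_right[of t \<zeta>]
  by eventually_elim (simp add: upper_switch_def lower_switch_def)

text \<open>The crossing point is the supremum of \<open>{z. K * z \<le> h z}\<close>.\<close>

lemma exists_crossing_of_step_function:
  fixes h h' :: "real \<Rightarrow> real" and K a b :: real
  assumes K: "K > 0" and bounds: "\<And>z. a \<le> h z" "\<And>z. h z \<le> b"
    and left: "\<And>\<zeta>. eventually (\<lambda>z. h z = h \<zeta>) (at_left \<zeta>)"
    and right: "\<And>\<zeta>. eventually (\<lambda>z. h z = h' \<zeta>) (at_right \<zeta>)"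
  shows "\<exists>\<zeta>. h' \<zeta> \<le> K * \<zeta> \<and> K * \<zeta> \<le> h \<zeta>"
proof -
  define S where "S = {z. K * z \<le> h z}"
  have "a / K \<in> S"
    using K bounds(1) by (simp add: S_def)
  then have S_ne: "S \<noteq> {}" by blast
  have "bdd_above S"
  proof
    show "z \<le> b / K" if "z \<in> S" for z
      using that K bounds(2)[of z] by (simp add: S_def pos_le_divide_eq mult.commute)
  qed
  define \<zeta> where "\<zeta> = Sup S"
  have upper: "z \<le> \<zeta>" if "z \<in> S" for z
    unfolding \<zeta>_def using that \<open>bdd_above S\<close> by (rule cSup_upper)
  have "K * \<zeta> \<le> h \<zeta>"
  proof (rule ccontr)
    assume "\<not> K * \<zeta> \<le> h \<zeta>"
    then have "h \<zeta> / K < \<zeta>" "\<zeta> \<notin> S"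
      using K by (simp_all add: S_def divide_less_eq mult.commute)
    then have "eventually (\<lambda>z. h \<zeta> / K < z) (at_left \<zeta>)"
      by (intro order_tendstoD(1)[OF tendsto_ident_at])
    then have "eventually (\<lambda>z. z \<notin> S) (at_left \<zeta>)"
      using left[of \<zeta>] by eventually_elim (use K in \<open>simp add: S_def divide_less_eq mult.commute\<close>)
    then obtain c where "c < \<zeta>" and gap: "\<And>z. c < z \<Longrightarrow> z < \<zeta> \<Longrightarrow> z \<notin> S"
      by (auto simp: eventually_at_left_field)
    then obtain z where "z \<in> S" "c < z"
      using less_cSupD[OF S_ne] unfolding \<zeta>_def by blast
    then show False
      using gap upper \<open>\<zeta> \<notin> S\<close> by (metis order.not_eq_order_implies_strict)
  qed
  moreover have "h' \<zeta> \<le> K * \<zeta>"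
  proof (rule ccontr)
    assume "\<not> h' \<zeta> \<le> K * \<zeta>"
    then have "\<zeta> < h' \<zeta> / K"
      using K by (simp add: less_divide_eq mult.commute)
    then have "eventually (\<lambda>z. z < h' \<zeta> / K) (at_right \<zeta>)"
      by (intro order_tendstoD(2)[OF tendsto_ident_at])
    then have "eventually (\<lambda>z. z \<in> S \<and> \<zeta> < z) (at_right \<zeta>)"
      using right[of \<zeta>] eventually_at_right_less[of \<zeta>]
      by eventually_elim (use K in \<open>simp add: S_def less_divide_eq mult.commute\<close>)
    then obtain z where "z \<in> S" "\<zeta> < z"
      using eventually_happens' trivial_limit_at_right_real by blast
    then show False
      using upper by fastforce
  qed
  ultimately show ?thesis by blast
qed

lemma exists_net_demand_crossing:
  fixes L :: "'b::finite \<Rightarrow> 'l set" and K :: real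
  assumes "\<And>j. finite (L j)" and "\<And>j l. l \<in> L j \<Longrightarrow> 0 \<le> dbar l j"
    and "\<And>j l. l \<in> L j \<Longrightarrow> \<rho> l j \<in> {0, 1}" and "K > 0"
  shows "\<exists>\<zeta>. net_demand L dbar pL (\<lambda>l j. lower_switch (\<theta> l j) (\<rho> l j) \<zeta>) \<le> K * \<zeta> \<and>
    K * \<zeta> \<le> net_demand L dbar pL (\<lambda>l j. upper_switch (\<theta> l j) (\<rho> l j) \<zeta>)"
proof (rule exists_crossing_of_step_function)
  fix z
  have "0 \<le> upper_switch (\<theta> l j) (\<rho> l j) z \<and> upper_switch (\<theta> l j) (\<rho> l j) z \<le> 1"
    if "l \<in> L j" for l j
    using switch_binary(1)[OF assms(3)[OF that], of "\<theta> l j" z] by auto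
  then show "net_demand L dbar pL (\<lambda>_ _. 0) \<le> net_demand L dbar pL (\<lambda>l j. upper_switch (\<theta> l j) (\<rho> l j) z)"
    and "net_demand L dbar pL (\<lambda>l j. upper_switch (\<theta> l j) (\<rho> l j) z) \<le> net_demand L dbar pL (\<lambda>_ _. 1)"
    using assms(2) by (auto intro!: net_demand_mono)
next
  fix \<zeta>
  show "eventually (\<lambda>z. net_demand L dbar pL (\<lambda>l j. upper_switch (\<theta> l j) (\<rho> l j) z)
      = net_demand L dbar pL (\<lambda>l j. upper_switch (\<theta> l j) (\<rho> l j) \<zeta>)) (at_left \<zeta>)"
    using assms(1) by (rule eventually_net_demand_eq) (rule eventually_upper_switch_at_left)
next
  fix \<zeta>
  show "eventually (\<lambda>z. net_demand L dbar pL (\<lambda>l j. upper_switch (\<theta> l j) (\<rho> l j) z)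
      = net_demand L dbar pL (\<lambda>l j. lower_switch (\<theta> l j) (\<rho> l j) \<zeta>)) (at_right \<zeta>)"
    using assms(1) by (rule eventually_net_demand_eq) (rule eventually_upper_switch_at_right)
qed (fact assms(4))

lemma exists_subset_sum_between:
  fixes g :: "'a \<Rightarrow> real"
  assumes "finite U" and "\<And>u. u \<in> U \<Longrightarrow> 0 \<le> g u \<and> g u \<le> b" and "0 \<le> b"
    and "0 \<le> x" and "x \<le> sum g U"
  shows "\<exists>X\<subseteq>U. x \<le> sum g X \<and> sum g X \<le> x + b"
  using assms
proof (induction U rule: finite_induct)
  case empty
  then show ?case by auto
next
  case (insert u U)
  show ?case
  proof (cases "x \<le> sum g U")
    case True
    then show ?thesis using insert by blast
  next
    case False
    have "g u \<le> b"
      using insert.prems(1) by simp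
    with False have "sum g (insert u U) \<le> x + b"
      using insert.hyps by simp
    then show ?thesis
      using insert.prems(4) by (intro exI[of _ "insert u U"]) auto
  qed
qed

lemma exists_net_demand_between:
  fixes L :: "'b::finite \<Rightarrow> 'l set"
  assumes "\<And>j. finite (L j)" and "\<And>j l. l \<in> L j \<Longrightarrow> 0 \<le> dbar l j \<and> dbar l j \<le> \<beta>"
    and "0 \<le> \<beta>"
    and "\<And>j l. l \<in> L j \<Longrightarrow> lo l j \<le> hi l j \<and> hi l j \<le> lo l j + 1"
    and "net_demand L dbar pL lo \<le> x" and "x \<le> net_demand L dbar pL hi"
  shows "\<exists>\<sigma>. (\<forall>j. \<forall>l\<in>L j. \<sigma> l j = lo l j \<or> \<sigma> l j = hi l j) \<and>
    x \<le> net_demand L dbar pL \<sigma> \<and> net_demand L dbar pL \<sigma> \<le> x + \<beta>"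
proof -
  define \<Lambda> where "\<Lambda> = Sigma UNIV L"
  define g where "g = (\<lambda>(j, l). dbar l j * (hi l j - lo l j))"
  define switched where "switched X l j = (if (j, l) \<in> X then hi l j else lo l j)" for X l j
  have fin: "finite \<Lambda>"
    using assms(1) by (simp add: \<Lambda>_def)
  have switched: "net_demand L dbar pL (switched X) = net_demand L dbar pL lo + sum g X"
    if "X \<subseteq> \<Lambda>" for X
  proof -
    have "(\<Sum>(j, l)\<in>\<Lambda>. dbar l j * switched X l j)
        = (\<Sum>(j, l)\<in>\<Lambda>. dbar l j * lo l j) + (\<Sum>u\<in>\<Lambda>. if u \<in> X then g u else 0)"
      by (simp add: sum.distrib[symmetric] split_def switched_def g_def algebra_simps
          cong: if_cong, rule sum.cong) auto
    also have "(\<Sum>u\<in>\<Lambda>. if u \<in> X then g u else 0) = sum g X"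
      using that fin by (simp add: sum.If_cases Int_absorb1)
    finally show ?thesis
      using assms(1) by (simp add: net_demand_Sigma \<Lambda>_def)
  qed
  have "net_demand L dbar pL hi = net_demand L dbar pL lo + sum g \<Lambda>"
  proof -
    have "switched \<Lambda> l j = hi l j" if "l \<in> L j" for l j
      using that by (simp add: switched_def \<Lambda>_def)
    then have "net_demand L dbar pL (switched \<Lambda>) = net_demand L dbar pL hi"
      by (simp add: net_demand_def)
    then show ?thesis using switched[of \<Lambda>] by simp
  qed
  moreover have "0 \<le> g u \<and> g u \<le> \<beta>" if u_mem: "u \<in> \<Lambda>" for u
  proof -
    obtain j l where u: "u = (j, l)" and l: "l \<in> L j"
      using u_mem unfolding \<Lambda>_def by blast
    have "dbar l j * (hi l j - lo l j) \<le> dbar l j * 1"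
      using assms(2,4)[OF l] by (intro mult_left_mono) auto
    then show ?thesis
      using assms(2,4)[OF l] by (simp add: g_def u)
  qed
  ultimately obtain X where "X \<subseteq> \<Lambda>" "x - net_demand L dbar pL lo \<le> sum g X"
    "sum g X \<le> x - net_demand L dbar pL lo + \<beta>"
    using exists_subset_sum_between[OF fin _ assms(3), of g "x - net_demand L dbar pL lo"] assms(5,6)
    by auto
  then show ?thesis
    using switched[of X] by (intro exI[of _ "switched X"]) (auto simp: switched_def)
qed

lemma admissible_between_switches:
  fixes \<sigma> c dbar \<rho> :: "'l \<Rightarrow> 'b \<Rightarrow> real"
  assumes "\<And>j l. l \<in> L j \<Longrightarrow> c l j > 0" and "\<And>j l. l \<in> L j \<Longrightarrow> dbar l j > 0"
    and "\<forall>j. \<forall>l\<in>L j. \<sigma> l j = lower_switch (c l j / dbar l j) (\<rho> l j) \<zeta> \<or>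
      \<sigma> l j = upper_switch (c l j / dbar l j) (\<rho> l j) \<zeta>"
  shows "\<forall>j. \<forall>l\<in>L j.
    (\<zeta> > c l j / dbar l j \<longrightarrow> \<sigma> l j \<in> {0}) \<and>
    (\<zeta> = c l j / dbar l j \<longrightarrow> \<sigma> l j \<in> {0, \<rho> l j}) \<and>
    (\<bar>\<zeta>\<bar> < c l j / dbar l j \<longrightarrow> \<sigma> l j \<in> {\<rho> l j}) \<and>
    (\<zeta> = - c l j / dbar l j \<longrightarrow> \<sigma> l j \<in> {\<rho> l j, 1}) \<and>
    (\<zeta> < - c l j / dbar l j \<longrightarrow> \<sigma> l j \<in> {1})"
proof -
  have "c l j / dbar l j > 0 \<and> (\<sigma> l j = lower_switch (c l j / dbar l j) (\<rho> l j) \<zeta> \<or>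
      \<sigma> l j = upper_switch (c l j / dbar l j) (\<rho> l j) \<zeta>)" if "l \<in> L j" for j l
    using assms that by simp
  then show ?thesis
    unfolding lower_switch_def upper_switch_def by (fastforce simp: abs_less_iff)
qed

lemma finite_load_magnitudes:
  fixes L :: "'b::finite \<Rightarrow> 'l set"
  assumes "\<And>j. finite (L j)"
  shows "finite {dbar l j | l j. l \<in> L j}"
proof -
  have "{dbar l j | l j. l \<in> L j} = (\<lambda>(j, l). dbar l j) ` Sigma UNIV L"
    by auto
  then show ?thesis
    using assms by simp
qed

lemma beta_nonneg:
  fixes L :: "'b::finite \<Rightarrow> 'l set"
  assumes "\<And>j. finite (L j)"
  shows "0 \<le> beta L dbar"
  using finite_load_magnitudes[of L dbar, OF assms] by (simp add: beta_def)

lemma load_le_beta: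
  fixes L :: "'b::finite \<Rightarrow> 'l set"
  assumes "\<And>j. finite (L j)" and "l \<in> L j"
  shows "dbar l j \<le> beta L dbar"
  unfolding beta_def using finite_load_magnitudes[of L dbar, OF assms(1)] assms(2)
  by (intro Max_ge) auto

lemma exists_balanced_switching:
  fixes L :: "'b::finite \<Rightarrow> 'l set" and K :: real
  assumes L_fin: "\<And>j. finite (L j)" and dbar_pos: "\<And>j l. l \<in> L j \<Longrightarrow> 0 < dbar l j"
    and rho_bin: "\<And>j l. l \<in> L j \<Longrightarrow> \<rho> l j \<in> {0, 1}" and "K > 0"
  shows "\<exists>\<zeta> \<sigma>. (\<forall>j. \<forall>l\<in>L j. \<sigma> l j = lower_switch (\<theta> l j) (\<rho> l j) \<zeta> \<or>
      \<sigma> l j = upper_switch (\<theta> l j) (\<rho> l j) \<zeta>) \<and>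
    K * \<zeta> \<le> net_demand L dbar pL \<sigma> \<and> net_demand L dbar pL \<sigma> \<le> K * \<zeta> + beta L dbar"
proof -
  have dbar_nonneg: "\<And>j l. l \<in> L j \<Longrightarrow> 0 \<le> dbar l j"
    using dbar_pos by (simp add: less_imp_le)
  obtain \<zeta> where "net_demand L dbar pL (\<lambda>l j. lower_switch (\<theta> l j) (\<rho> l j) \<zeta>) \<le> K * \<zeta>"
    and "K * \<zeta> \<le> net_demand L dbar pL (\<lambda>l j. upper_switch (\<theta> l j) (\<rho> l j) \<zeta>)"
    using exists_net_demand_crossing[where L = L and dbar = dbar and \<rho> = \<rho> and \<theta> = \<theta> and pL = pL,
        OF L_fin dbar_nonneg rho_bin \<open>K > 0\<close>]
    by blast
  from exists_net_demand_between[where L = L and dbar = dbar, OF L_fin _ beta_nonneg[of L dbar, OF L_fin] _ this]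
  show ?thesis
    using dbar_nonneg load_le_beta[of L, OF L_fin] lower_le_upper_switch[OF rho_bin] by blast
qed

theorem lemma2:
  fixes E Et :: "('b::finite \<times> 'b) set"
    and L :: "'b \<Rightarrow> 'l set"
    and dbar c \<rho> :: "'l \<Rightarrow> 'b \<Rightarrow> real"
    and M \<gamma> \<kappa> A \<tau> pL :: "'b \<Rightarrow> real"
    and B \<tau>E :: "'b \<times> 'b \<Rightarrow> real"
  assumes E_conn: "weakly_connected E" and E_orient: "oriented E"
    and Et_conn: "weakly_connected Et"
    and L_fin: "\<And>j. finite (L j)"
    and dbar_pos: "\<And>j l. l \<in> L j \<Longrightarrow> dbar l j > 0"
    and rho_bin: "\<And>j l. l \<in> L j \<Longrightarrow> \<rho> l j \<in> {0, 1}"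
    and c_pos: "\<And>j l. l \<in> L j \<Longrightarrow> c l j > 0"
    and M_pos: "\<And>j. M j > 0" and \<gamma>_pos: "\<And>j. \<gamma> j > 0"
    and \<kappa>_pos: "\<And>j. \<kappa> j > 0" and A_pos: "\<And>j. A j > 0"
    and \<tau>_pos: "\<And>j. \<tau> j > 0"
    and B_pos: "\<And>e. e \<in> E \<Longrightarrow> B e > 0"
    and \<tau>E_pos: "\<And>e. e \<in> Et \<Longrightarrow> \<tau>E e > 0"
  shows "\<exists>\<sigma>s :: 'l \<Rightarrow> 'b \<Rightarrow> real. (\<forall>j. \<forall>l\<in>L j. \<sigma>s l j \<in> {0, 1}) \<and>
    (\<exists>\<eta> \<omega> pM pc \<psi> pcs \<zeta>.
       equilibrium E Et L dbar M \<gamma> \<kappa> A \<tau> pL B \<tau>E \<sigma>s \<eta> \<omega> pM pc \<psi> \<and>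
       (\<forall>j. pc j = pcs) \<and>
       pcs - beta L dbar / (\<Sum>j\<in>UNIV. \<kappa> j) \<le> \<zeta> \<and> \<zeta> \<le> pcs \<and>
       (\<forall>j. \<forall>l\<in>L j.
          (\<zeta> > c l j / dbar l j \<longrightarrow> \<sigma>s l j \<in> {0}) \<and>
          (\<zeta> = c l j / dbar l j \<longrightarrow> \<sigma>s l j \<in> {0, \<rho> l j}) \<and>
          (\<bar>\<zeta>\<bar> < c l j / dbar l j \<longrightarrow> \<sigma>s l j \<in> {\<rho> l j}) \<and>
          (\<zeta> = - c l j / dbar l j \<longrightarrow> \<sigma>s l j \<in> {\<rho> l j, 1}) \<and>
          (\<zeta> < - c l j / dbar l j \<longrightarrow> \<sigma>s l j \<in> {1})))"
proof -
  define K where "K = (\<Sum>j\<in>UNIV. \<kappa> j)"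
  have "K > 0"
    unfolding K_def using \<kappa>_pos by (simp add: sum_pos)
  obtain \<zeta> \<sigma>s where \<sigma>s: "\<forall>j. \<forall>l\<in>L j. \<sigma>s l j = lower_switch (c l j / dbar l j) (\<rho> l j) \<zeta> \<or>
      \<sigma>s l j = upper_switch (c l j / dbar l j) (\<rho> l j) \<zeta>"
    and demand: "K * \<zeta> \<le> net_demand L dbar pL \<sigma>s" "net_demand L dbar pL \<sigma>s \<le> K * \<zeta> + beta L dbar"
    using exists_balanced_switching[where L = L and dbar = dbar and \<rho> = \<rho> and pL = pL
        and \<theta> = "\<lambda>l j. c l j / dbar l j", OF L_fin dbar_pos rho_bin \<open>K > 0\<close>]
    by blast
  define pcs where "pcs = net_demand L dbar pL \<sigma>s / K"
  have "(\<Sum>j\<in>UNIV. \<kappa> j) * pcs = net_demand L dbar pL \<sigma>s"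
    using \<open>K > 0\<close> by (simp add: pcs_def K_def[symmetric])
  then obtain \<eta> \<omega> pM \<psi> where "equilibrium E Et L dbar M \<gamma> \<kappa> A \<tau> pL B \<tau>E \<sigma>s \<eta> \<omega> pM (\<lambda>_. pcs) \<psi>"
    using equilibrium_with_common_command[OF E_conn Et_conn] B_pos by (metis less_irrefl)
  moreover have "pcs - beta L dbar / (\<Sum>j\<in>UNIV. \<kappa> j) \<le> \<zeta> \<and> \<zeta> \<le> pcs"
    using demand \<open>K > 0\<close> by (simp add: pcs_def K_def[symmetric] field_simps)
  moreover have "\<forall>j. \<forall>l\<in>L j. \<sigma>s l j \<in> {0, 1}"
    using \<sigma>s switch_binary[OF rho_bin] by fastforce
  moreover note admissible_between_switches[OF c_pos dbar_pos \<sigma>s]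
  ultimately show ?thesis
    by blast
qed

end
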